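(* Let $(x_n)$ be a bounded sequence and $(y_n)$ a weakly Cauchy sequence in a Banach space $X$. Then for every $\varepsilon\in(0,1)$ there is a subsequence $(n_k)$ with the following properties: - both $(x_{n_k})_k$ and $(x_{n_k}+y_{n_k})_k$ are $c_J$-stable; - $(1-\varepsilon)\,\tilde c_J(x_n)\le c_J(x_{n_k})\le\tilde c_J(x_n)$; - $c_J(x_{n_k}+y_{n_k})=c_J(x_{n_k})$.
   Context: For a bounded sequence $(x_n)$ in a Banach space, define $c_m=\inf\{\|\sum_{n\ge m}\alpha_n x_n\|: \sum_{n\ge m}|\alpha_n|=1\}$ and $c_J(x_n)=\sup_m c_m$. Passing to a subsequence does not decrease $c_J$. Define $\tilde c_J(x_n)=\sup\{c_J(x_{n_k}): (x_{n_k}) \text{ a subsequence of } (x_n)\}$. A sequence is called $c_J$-stable if $c_J(x_n)=\tilde c_J(x_n)$. *)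

theory Defs
  imports "HOL-Analysis.Analysis"
begin

definition c_m :: "(nat \<Rightarrow> 'a::banach) \<Rightarrow> nat \<Rightarrow> real" where
  "c_m x m = Inf {norm (\<Sum>n. \<alpha> n *\<^sub>R x n) | \<alpha>.
      (\<forall>n<m. \<alpha> n = 0) \<and> summable (\<lambda>n. \<bar>\<alpha> n\<bar>) \<and> (\<Sum>n. \<bar>\<alpha> n\<bar>) = 1}"

definition c_J :: "(nat \<Rightarrow> 'a::banach) \<Rightarrow> real" where
  "c_J x = (SUP m. c_m x m)"

definition c_J_tilde :: "(nat \<Rightarrow> 'a::banach) \<Rightarrow> real" where
  "c_J_tilde x = Sup {c_J (x \<circ> r) | r. strict_mono r}"

definition c_J_stable :: "(nat \<Rightarrow> 'a::banach) \<Rightarrow> bool" where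
  "c_J_stable x \<longleftrightarrow> c_J x = c_J_tilde x"

definition weakly_Cauchy :: "(nat \<Rightarrow> 'a::real_normed_vector) \<Rightarrow> bool" where
  "weakly_Cauchy y \<longleftrightarrow> (\<forall>f :: 'a \<Rightarrow> real. bounded_linear f \<longrightarrow> Cauchy (\<lambda>n. f (y n)))"

end

theory Submission
  imports Defs
begin

text \<open>A c_J-stable subsequence with c_J close to c_J_tilde x comes from a diagonal argument:
  each successive subsequence nearly attains the c_J_tilde of the previous one, and c_J does not
  decrease along subsequences. Adding a weakly Cauchy y does not change c_J of a bounded sequence:
  normalised blocks of x of norm close to c_J x can be chosen with coefficients summing to zero,
  so the corresponding blocks of y tend weakly to zero and, by Mazur's theorem, have a convex
  combination of small norm. Applying this to -y gives equality, and since it holds along every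
  subsequence, stability passes from x \<circ> r to the perturbed subsequence.\<close>

section \<open>Sublinear functionals and the Hahn--Banach theorem\<close>

definition sublinear :: "('a::real_vector \<Rightarrow> real) \<Rightarrow> bool" where
  "sublinear q \<longleftrightarrow> (\<forall>u v. q (u + v) \<le> q u + q v) \<and> (\<forall>c u. 0 < c \<longrightarrow> q (c *\<^sub>R u) = c * q u)"

lemma sublinear_add: "sublinear q \<Longrightarrow> q (u + v) \<le> q u + q v"
  unfolding sublinear_def by blast

lemma sublinear_scaleR: "sublinear q \<Longrightarrow> 0 < c \<Longrightarrow> q (c *\<^sub>R u) = c * q u"
  unfolding sublinear_def by blast

lemma sublinear_zero: "sublinear q \<Longrightarrow> q 0 = 0"
  using sublinear_scaleR[of q 2 0] by simp

lemma sublinear_scaleR_nonneg: "sublinear q \<Longrightarrow> 0 \<le> c \<Longrightarrow> q (c *\<^sub>R u) = c * q u"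
  by (cases "c = 0") (simp_all add: sublinear_zero sublinear_scaleR)

lemma sublinear_minus_le: "sublinear q \<Longrightarrow> - q (- v) \<le> q v"
  using sublinear_add[of q v "- v"] sublinear_zero[of q] by simp

lemma sublinear_norm: "sublinear (norm :: 'a::real_normed_vector \<Rightarrow> real)"
  unfolding sublinear_def by (auto simp: norm_triangle_ineq)

lemma convex_cone_hull_singleton: "convex_cone hull {a} = {c *\<^sub>R a | c. 0 \<le> c}"
  unfolding convex_cone_hull_convex_hull by (auto intro: exI[of _ 0])

text \<open>The one-step extension of the Hahn--Banach argument, done along a whole cone at once.\<close>
lemma sublinear_cone_Inf:
  fixes q :: "'a::real_vector \<Rightarrow> real" and K :: "('a \<times> real) set"
  assumes q: "sublinear q" and K: "convex_cone K" and below: "\<And>k s. (k, s) \<in> K \<Longrightarrow> s \<le> q k"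
  defines "Q \<equiv> \<lambda>w. Inf ((\<lambda>(k, s). q (w + k) - s) ` K)"
  shows "sublinear Q" and "Q w \<le> q w" and "(k, s) \<in> K \<Longrightarrow> Q w \<le> q (w + k) - s"
proof -
  have K0: "(0, 0) \<in> K"
    using convex_cone_contains_0[OF K] by (simp add: zero_prod_def)
  have Kadd: "(k + k', s + s') \<in> K" if "(k, s) \<in> K" "(k', s') \<in> K" for k s k' s'
    using convex_cone_add[OF K that] by simp
  have Kscale: "(c *\<^sub>R k, c * s) \<in> K" if "(k, s) \<in> K" "0 \<le> c" for k s c
    using convex_cone_scaleR[OF K that(2,1)] by simp
  have bdd: "bdd_below ((\<lambda>(k, s). q (w + k) - s) ` K)" for w
  proof (rule bdd_belowI2)
    fix ks assume "ks \<in> K"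
    then obtain k s where ks: "ks = (k, s)" "(k, s) \<in> K" by (cases ks) auto
    have "q k \<le> q (w + k) + q (- w)" using sublinear_add[OF q, of "w + k" "- w"] by simp
    then show "- q (- w) \<le> (case ks of (k, s) \<Rightarrow> q (w + k) - s)"
      using below[OF ks(2)] ks(1) by simp
  qed
  have low: "Q w \<le> q (w + k) - s" if "(k, s) \<in> K" for w k s
    unfolding Q_def by (rule cInf_lower[OF _ bdd]) (use that in force)
  have greatest: "z \<le> Q w" if "\<And>k s. (k, s) \<in> K \<Longrightarrow> z \<le> q (w + k) - s" for z w
    unfolding Q_def by (rule cInf_greatest) (use K0 that in force)+
  show "(k, s) \<in> K \<Longrightarrow> Q w \<le> q (w + k) - s" by (rule low)
  show "Q w \<le> q w" for w using low[OF K0, of w] by simp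
  show "sublinear Q" unfolding sublinear_def
  proof (intro conjI allI impI)
    fix u v
    have "Q (u + v) - (q (v + k') - s') \<le> Q u" if "(k', s') \<in> K" for k' s'
    proof (rule greatest)
      fix k s assume ks: "(k, s) \<in> K"
      have "Q (u + v) \<le> q (u + v + (k + k')) - (s + s')" by (rule low[OF Kadd[OF ks that]])
      also have "\<dots> \<le> (q (u + k) - s) + (q (v + k') - s')"
        using sublinear_add[OF q, of "u + k" "v + k'"] by (simp add: algebra_simps)
      finally show "Q (u + v) - (q (v + k') - s') \<le> q (u + k) - s" by simp
    qed
    then have "Q (u + v) - Q u \<le> Q v" by (intro greatest) force
    then show "Q (u + v) \<le> Q u + Q v" by simp
  next
    fix c :: real and u assume c: "0 < c"
    have "Q (c *\<^sub>R u) \<le> c * Q u"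
    proof -
      have "Q (c *\<^sub>R u) / c \<le> Q u"
      proof (rule greatest)
        fix k s assume "(k, s) \<in> K"
        then have "Q (c *\<^sub>R u) \<le> q (c *\<^sub>R u + c *\<^sub>R k) - c * s" using c by (intro low Kscale) auto
        also have "\<dots> = c * (q (u + k) - s)"
          using sublinear_scaleR[OF q c, of "u + k"] by (simp add: algebra_simps)
        finally show "Q (c *\<^sub>R u) / c \<le> q (u + k) - s" using c by (simp add: divide_simps mult.commute)
      qed
      then show ?thesis using c by (simp add: divide_simps mult.commute)
    qed
    moreover have "c * Q u \<le> Q (c *\<^sub>R u)"
    proof (rule greatest)
      fix k s assume "(k, s) \<in> K"
      then have "c * Q u \<le> c * (q (u + inverse c *\<^sub>R k) - inverse c * s)"
        using c by (intro mult_left_mono low Kscale) auto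
      also have "\<dots> = q (c *\<^sub>R u + k) - s"
        using sublinear_scaleR[OF q c, of "u + inverse c *\<^sub>R k"] c by (simp add: algebra_simps)
      finally show "c * Q u \<le> q (c *\<^sub>R u + k) - s" .
    qed
    ultimately show "Q (c *\<^sub>R u) = c * Q u" by simp
  qed
qed

lemma sublinear_Inf_chain:
  fixes p :: "'a::real_vector \<Rightarrow> real"
  assumes ne: "C \<noteq> {}" and sub: "\<And>q. q \<in> C \<Longrightarrow> sublinear q \<and> q \<le> p"
    and chain: "\<And>q q'. q \<in> C \<Longrightarrow> q' \<in> C \<Longrightarrow> q \<le> q' \<or> q' \<le> q"
  defines "Q \<equiv> \<lambda>v. Inf ((\<lambda>q. q v) ` C)"
  shows "sublinear Q" and "q \<in> C \<Longrightarrow> Q \<le> q"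
proof -
  have bdd: "bdd_below ((\<lambda>q. q v) ` C)" for v
  proof (rule bdd_belowI2)
    fix q assume "q \<in> C"
    then have "sublinear q" "q (- v) \<le> p (- v)" using sub by (auto simp: le_fun_def)
    then show "- p (- v) \<le> q v" using sublinear_minus_le[of q v] by linarith
  qed
  have low: "Q v \<le> q v" if "q \<in> C" for q v
    unfolding Q_def by (rule cInf_lower[OF _ bdd]) (use that in blast)
  have greatest: "z \<le> Q v" if "\<And>q. q \<in> C \<Longrightarrow> z \<le> q v" for z v
    unfolding Q_def by (rule cInf_greatest) (use ne that in blast)+
  show "q \<in> C \<Longrightarrow> Q \<le> q" using low by (simp add: le_fun_def)
  show "sublinear Q" unfolding sublinear_def
  proof (intro conjI allI impI)
    fix u v
    have "Q (u + v) - q' v \<le> Q u" if q': "q' \<in> C" for q'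
    proof (rule greatest)
      fix q assume q: "q \<in> C"
      obtain r where "r \<in> C" "r \<le> q" "r \<le> q'" using chain[OF q q'] q q' by (metis order_refl)
      then have "Q (u + v) \<le> r u + r v" using low sub sublinear_add by (meson order_trans)
      then show "Q (u + v) - q' v \<le> q u" using \<open>r \<le> q\<close> \<open>r \<le> q'\<close> by (simp add: le_fun_def) (smt (verit))
    qed
    then have "Q (u + v) - Q u \<le> Q v" by (intro greatest) (smt (verit))
    then show "Q (u + v) \<le> Q u + Q v" by simp
  next
    fix c :: real and v assume c: "0 < c"
    have "Q (c *\<^sub>R v) / c \<le> Q v"
    proof (rule greatest)
      fix q assume "q \<in> C"
      then have "Q (c *\<^sub>R v) \<le> c * q v" using low sub sublinear_scaleR c by metis
      then show "Q (c *\<^sub>R v) / c \<le> q v" using c by (simp add: divide_simps mult.commute)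
    qed
    moreover have "c * Q v \<le> Q (c *\<^sub>R v)"
    proof (rule greatest)
      fix q assume "q \<in> C"
      then have "c * Q v \<le> c * q v" using low c by simp
      then show "c * Q v \<le> q (c *\<^sub>R v)" using sub \<open>q \<in> C\<close> sublinear_scaleR c by metis
    qed
    ultimately show "Q (c *\<^sub>R v) = c * Q v" using c by (simp add: divide_simps mult.commute)
  qed
qed

lemma minimal_sublinear_imp_linear:
  fixes m :: "'a::real_vector \<Rightarrow> real"
  assumes m: "sublinear m" and minimal: "\<And>q. sublinear q \<Longrightarrow> q \<le> m \<Longrightarrow> q = m"
  shows "linear m"
proof -
  text \<open>Pushing m down along the ray through (v, m v) yields a sublinear functional below m,
    hence m itself; this makes m additive along every line.\<close>
  have m_minus: "m (- v) = - m v" for v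
  proof -
    define K where "K = convex_cone hull {(v, m v)}"
    have K: "convex_cone K" unfolding K_def by (rule convex_cone_convex_cone_hull)
    have below: "s \<le> m k" if "(k, s) \<in> K" for k s
      using that sublinear_scaleR_nonneg[OF m] unfolding K_def convex_cone_hull_singleton by auto
    define Q where "Q = (\<lambda>w. Inf ((\<lambda>(k, s). m (w + k) - s) ` K))"
    have Q: "sublinear Q" "Q \<le> m" and Q_le: "\<And>w k s. (k, s) \<in> K \<Longrightarrow> Q w \<le> m (w + k) - s"
      using sublinear_cone_Inf[OF m K below] unfolding Q_def by (auto simp: le_fun_def)
    from Q have "Q = m" by (rule minimal)
    moreover have "(v, m v) \<in> K" unfolding K_def by (rule hull_inc) simp
    ultimately have "m (- v) \<le> m (- v + v) - m v" using Q_le by blast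
    then show ?thesis using sublinear_zero[OF m] sublinear_minus_le[OF m, of v] by simp
  qed
  show "linear m"
  proof (rule linearI)
    fix u v
    have "m (- (u + v)) \<le> m (- u) + m (- v)" by (metis minus_add_distrib sublinear_add[OF m])
    then have "m u + m v \<le> m (u + v)" unfolding m_minus by linarith
    then show "m (u + v) = m u + m v" using sublinear_add[OF m, of u v] by linarith
  next
    fix c :: real and v
    show "m (c *\<^sub>R v) = c *\<^sub>R m v"
    proof (cases "0 \<le> c")
      case True
      then show ?thesis using sublinear_scaleR_nonneg[OF m] by simp
    next
      case False
      then have "m (c *\<^sub>R v) = - m ((- c) *\<^sub>R v)" using m_minus[of "(- c) *\<^sub>R v"] by simp
      then show ?thesis using sublinear_scaleR_nonneg[OF m, of "- c" v] False by simp
    qed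
  qed
qed

theorem Hahn_Banach_sublinear:
  fixes p :: "'a::real_vector \<Rightarrow> real"
  assumes p: "sublinear p"
  shows "\<exists>g. linear g \<and> g \<le> p"
proof -
  define A where "A = {q. sublinear q \<and> q \<le> p}"
  have po: "partial_order_on A (relation_of (\<ge>) A)"
    unfolding partial_order_on_def preorder_on_def refl_on_def trans_def antisym_def relation_of_def
    by auto
  have "\<exists>u\<in>A. \<forall>q\<in>C. u \<le> q" if C: "C \<in> Chains (relation_of (\<ge>) A)" for C
  proof (cases "C = {}")
    case True
    then show ?thesis using p unfolding A_def by auto
  next
    case False
    have sub: "\<And>q. q \<in> C \<Longrightarrow> sublinear q \<and> q \<le> p"
      and chain: "\<And>q q'. q \<in> C \<Longrightarrow> q' \<in> C \<Longrightarrow> q \<le> q' \<or> q' \<le> q"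
      using C unfolding Chains_def relation_of_def A_def by auto
    define Q where "Q = (\<lambda>v. Inf ((\<lambda>q. q v) ` C))"
    have Q: "sublinear Q" "\<And>q. q \<in> C \<Longrightarrow> Q \<le> q"
      using sublinear_Inf_chain[OF False sub chain] unfolding Q_def by auto
    obtain q0 where "q0 \<in> C" using False by blast
    then have "Q \<le> p" using Q(2) sub order_trans by blast
    then show ?thesis using Q unfolding A_def by blast
  qed
  then obtain m where "m \<in> A" and minimal: "\<And>q. q \<in> A \<Longrightarrow> q \<le> m \<Longrightarrow> q = m"
    using predicate_Zorn[OF po] by blast
  then have "sublinear m" "m \<le> p" unfolding A_def by auto
  moreover have "q = m" if "sublinear q" "q \<le> m" for q
    using that \<open>m \<le> p\<close> by (intro minimal) (auto simp: A_def)
  ultimately show ?thesis using minimal_sublinear_imp_linear by blast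
qed

theorem Hahn_Banach_cone:
  fixes q :: "'a::real_vector \<Rightarrow> real" and K :: "('a \<times> real) set"
  assumes q: "sublinear q" and K: "convex_cone K" and below: "\<And>k s. (k, s) \<in> K \<Longrightarrow> s \<le> q k"
  shows "\<exists>g. linear g \<and> g \<le> q \<and> (\<forall>(k, s)\<in>K. s \<le> g k)"
proof -
  define Q where "Q = (\<lambda>w. Inf ((\<lambda>(k, s). q (w + k) - s) ` K))"
  have Q: "sublinear Q" "Q \<le> q" and Q_le: "\<And>w k s. (k, s) \<in> K \<Longrightarrow> Q w \<le> q (w + k) - s"
    using sublinear_cone_Inf[OF q K below] unfolding Q_def by (auto simp: le_fun_def)
  obtain g where g: "linear g" "g \<le> Q" using Hahn_Banach_sublinear[OF Q(1)] by blast
  have "s \<le> g k" if "(k, s) \<in> K" for k s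
  proof -
    have "g (- k) \<le> q (- k + k) - s" using le_funD[OF g(2)] Q_le[OF that] order_trans by blast
    then show ?thesis using sublinear_zero[OF q] linear_neg[OF g(1)] by simp
  qed
  then show ?thesis using g Q(2) order_trans by blast
qed

lemma linear_le_norm_imp_bounded_linear:
  fixes g :: "'a::real_normed_vector \<Rightarrow> real"
  assumes g: "linear g" "g \<le> norm"
  shows "bounded_linear g" and "\<bar>g v\<bar> \<le> norm v"
proof -
  have abs_le: "\<bar>g v\<bar> \<le> norm v" for v
    using le_funD[OF g(2), of v] le_funD[OF g(2), of "- v"] linear_neg[OF g(1), of v] by simp
  then show "\<bar>g v\<bar> \<le> norm v" .
  show "bounded_linear g"
    by (rule bounded_linear_intro[where K = 1]) (use g(1) abs_le in \<open>auto simp: linear_add linear_scale\<close>)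
qed

lemma norming_functional:
  fixes v :: "'a::real_normed_vector"
  obtains f where "bounded_linear f" "\<And>w. \<bar>f w\<bar> \<le> norm w" "f v = norm v"
proof -
  define K where "K = convex_cone hull {(v, norm v)}"
  have K: "convex_cone K" unfolding K_def by (rule convex_cone_convex_cone_hull)
  have "s \<le> norm k" if "(k, s) \<in> K" for k s
    using that unfolding K_def convex_cone_hull_singleton by auto
  then obtain g where g: "linear g" "g \<le> norm" and above: "\<forall>(k, s)\<in>K. s \<le> g k"
    using Hahn_Banach_cone[OF sublinear_norm K] by blast
  have "(v, norm v) \<in> K" unfolding K_def by (rule hull_inc) simp
  then have "g v = norm v" using above le_funD[OF g(2), of v] by fastforce
  then show ?thesis using that linear_le_norm_imp_bounded_linear[OF g] by blast
qed

lemma convex_cone_over_convex: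
  fixes C :: "'a::real_vector set"
  assumes C: "convex C" "C \<noteq> {}"
  shows "convex_cone {c *\<^sub>R (v, \<delta>) | c v. 0 \<le> c \<and> v \<in> C}" (is "convex_cone ?K")
  unfolding convex_cone_iff
proof (intro conjI ballI allI impI)
  obtain v0 where "v0 \<in> C" using C(2) by blast
  then have "0 *\<^sub>R (v0, \<delta>) \<in> ?K" by blast
  then show "0 \<in> ?K" by (simp add: zero_prod_def)
next
  fix z z' assume "z \<in> ?K" "z' \<in> ?K"
  then obtain c v c' v' where cv: "0 \<le> c" "v \<in> C" "z = c *\<^sub>R (v, \<delta>)"
    and cv': "0 \<le> c'" "v' \<in> C" "z' = c' *\<^sub>R (v', \<delta>)"
    by blast
  show "z + z' \<in> ?K"
  proof (cases "c + c' = 0")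
    case True
    then have "z' = 0" using cv cv' by (simp add: zero_prod_def)
    then show ?thesis using \<open>z \<in> ?K\<close> by simp
  next
    case False
    define w where "w = (c / (c + c')) *\<^sub>R v + (c' / (c + c')) *\<^sub>R v'"
    have "w \<in> C"
      unfolding w_def using cv cv' False
      by (intro convexD[OF C(1)]) (auto simp: add_divide_distrib[symmetric])
    moreover have "(c + c') *\<^sub>R w = c *\<^sub>R v + c' *\<^sub>R v'"
      using False by (simp add: w_def scaleR_add_right)
    then have "z + z' = (c + c') *\<^sub>R (w, \<delta>)"
      using cv cv' by (simp add: algebra_simps)
    ultimately show ?thesis using cv cv' by force
  qed
next
  fix z and a :: real assume "z \<in> ?K" "0 \<le> a"
  then show "a *\<^sub>R z \<in> ?K" by (force simp del: scaleR_Pair)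
qed

theorem Mazur_weakly_null:
  fixes u :: "nat \<Rightarrow> 'a::real_normed_vector"
  assumes weakly_null: "\<And>f :: 'a \<Rightarrow> real. bounded_linear f \<Longrightarrow> (\<lambda>j. f (u j)) \<longlonglongrightarrow> 0"
  shows "0 \<in> closure (convex hull (range u))"
proof (rule ccontr)
  assume "0 \<notin> closure (convex hull (range u))"
  then obtain \<delta> where \<delta>: "0 < \<delta>" and far: "\<And>v. v \<in> convex hull (range u) \<Longrightarrow> \<delta> \<le> norm v"
    unfolding closure_approachable by (auto simp: dist_norm not_less)
  define C where "C = uminus ` (convex hull (range u))"
  define K where "K = {c *\<^sub>R (v, \<delta>) | c v. 0 \<le> c \<and> v \<in> C}"
  have "convex_cone K"
    unfolding K_def C_def by (intro convex_cone_over_convex convex_negations) auto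
  moreover have "s \<le> norm k" if "(k, s) \<in> K" for k s
    using that far mult_left_mono unfolding K_def C_def by fastforce
  ultimately obtain g where g: "linear g" "g \<le> norm" and above: "\<forall>(k, s)\<in>K. s \<le> g k"
    using Hahn_Banach_cone[OF sublinear_norm] by blast
  have "(- u j, \<delta>) \<in> K" for j
    unfolding K_def C_def using hull_inc[of "u j" "range u"] by force
  then have "\<delta> \<le> g (- u j)" for j using above by blast
  then have "g (u j) \<le> - \<delta>" for j using linear_neg[OF g(1), of "u j"] by (smt (verit))
  moreover have "(\<lambda>j. g (u j)) \<longlonglongrightarrow> 0"
    by (rule weakly_null) (rule linear_le_norm_imp_bounded_linear[OF g])
  ultimately have "0 \<le> - \<delta>" by (intro LIMSEQ_le_const2) auto
  then show False using \<delta> by simp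
qed

definition c_m_set :: "(nat \<Rightarrow> 'a::banach) \<Rightarrow> nat \<Rightarrow> real set" where
  "c_m_set x m = {norm (\<Sum>n. \<alpha> n *\<^sub>R x n) | \<alpha>.
      (\<forall>n<m. \<alpha> n = 0) \<and> summable (\<lambda>n. \<bar>\<alpha> n\<bar>) \<and> (\<Sum>n. \<bar>\<alpha> n\<bar>) = 1}"

lemma c_m_eq_Inf: "c_m x m = Inf (c_m_set x m)"
  unfolding c_m_def c_m_set_def by simp

lemma bdd_below_c_m_set: "bdd_below (c_m_set x m)"
  unfolding c_m_set_def by (rule bdd_belowI[of _ 0]) auto

lemma c_m_set_antimono: "m \<le> m' \<Longrightarrow> c_m_set x m' \<subseteq> c_m_set x m"
  unfolding c_m_set_def by fastforce

lemma c_m_set_cong: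
  assumes "\<And>n. m \<le> n \<Longrightarrow> x n = x' n"
  shows "c_m_set x m = c_m_set x' m"
proof -
  have eq: "(\<lambda>n. \<alpha> n *\<^sub>R x n) = (\<lambda>n. \<alpha> n *\<^sub>R x' n)" if "\<forall>n<m. \<alpha> n = 0" for \<alpha>
  proof
    fix n show "\<alpha> n *\<^sub>R x n = \<alpha> n *\<^sub>R x' n" using that assms[of n] by (cases "n < m") auto
  qed
  show ?thesis unfolding c_m_set_def by (intro Collect_cong ex_cong1) (auto simp: eq)
qed

lemma summable_scaleR_bounded:
  fixes x :: "nat \<Rightarrow> 'a::banach"
  assumes "summable (\<lambda>n. \<bar>\<alpha> n\<bar>)" and "\<And>n. norm (x n) \<le> B"
  shows "summable (\<lambda>n. \<alpha> n *\<^sub>R x n)"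
proof (rule summable_comparison_test)
  show "\<exists>N. \<forall>n\<ge>N. norm (\<alpha> n *\<^sub>R x n) \<le> \<bar>\<alpha> n\<bar> * B"
    using assms(2) by (simp add: mult_left_mono)
  show "summable (\<lambda>n. \<bar>\<alpha> n\<bar> * B)" using assms(1) by (rule summable_mult2)
qed

lemma norm_finite_combination_in_c_m_set:
  fixes x :: "nat \<Rightarrow> 'a::banach"
  assumes "(\<Sum>i\<in>{m..<N}. \<bar>\<beta> i\<bar>) = 1"
  shows "norm (\<Sum>i\<in>{m..<N}. \<beta> i *\<^sub>R x i) \<in> c_m_set x m"
proof -
  define \<alpha> where "\<alpha> = (\<lambda>i. if i \<in> {m..<N} then \<beta> i else 0)"
  have "(\<lambda>n. \<alpha> n *\<^sub>R x n) sums (\<Sum>i\<in>{m..<N}. \<alpha> i *\<^sub>R x i)"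
    by (rule sums_finite) (auto simp: \<alpha>_def)
  moreover have "(\<Sum>i\<in>{m..<N}. \<alpha> i *\<^sub>R x i) = (\<Sum>i\<in>{m..<N}. \<beta> i *\<^sub>R x i)"
    by (rule sum.cong) (auto simp: \<alpha>_def)
  moreover have "(\<lambda>n. \<bar>\<alpha> n\<bar>) sums (\<Sum>i\<in>{m..<N}. \<bar>\<alpha> i\<bar>)"
    by (rule sums_finite) (auto simp: \<alpha>_def)
  moreover have "(\<Sum>i\<in>{m..<N}. \<bar>\<alpha> i\<bar>) = 1"
    using assms by (simp add: \<alpha>_def)
  ultimately show ?thesis unfolding c_m_set_def
    by (intro CollectI exI[of _ \<alpha>]) (auto simp: sums_iff \<alpha>_def)
qed

lemma c_m_set_nonempty: "c_m_set (x :: nat \<Rightarrow> 'a::banach) m \<noteq> {}"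
  using norm_finite_combination_in_c_m_set[where m = m and N = "Suc m" and \<beta> = "\<lambda>_. 1" and x = x] by auto

lemma c_m_nonneg: "0 \<le> c_m x m"
  unfolding c_m_eq_Inf by (rule cInf_greatest[OF c_m_set_nonempty]) (auto simp: c_m_set_def)

lemma c_m_le_finite_combination:
  fixes x :: "nat \<Rightarrow> 'a::banach"
  assumes "(\<Sum>i\<in>{m..<N}. \<bar>\<beta> i\<bar>) = 1"
  shows "c_m x m \<le> norm (\<Sum>i\<in>{m..<N}. \<beta> i *\<^sub>R x i)"
  unfolding c_m_eq_Inf by (rule cInf_lower[OF norm_finite_combination_in_c_m_set[OF assms] bdd_below_c_m_set])

lemma c_m_le_norm: "c_m x m \<le> norm (x m)"
  using c_m_le_finite_combination[where m = m and N = "Suc m" and \<beta> = "\<lambda>_. 1" and x = x] by simp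

lemma c_m_le_c_J:
  fixes x :: "nat \<Rightarrow> 'a::banach"
  assumes "bounded (range x)"
  shows "c_m x m \<le> c_J x"
proof -
  obtain B where "\<And>n. norm (x n) \<le> B" using assms by (auto simp: bounded_iff)
  then have "bdd_above (range (c_m x))" by (intro bdd_aboveI2[where M = B]) (use c_m_le_norm order_trans in blast)
  then show ?thesis unfolding c_J_def by (rule cSUP_upper[OF UNIV_I])
qed

lemma c_J_least: "(\<And>m. c_m x m \<le> e) \<Longrightarrow> c_J x \<le> e"
  unfolding c_J_def by (rule cSUP_least) auto

lemma c_J_le_bound: "(\<And>n. norm (x n) \<le> B) \<Longrightarrow> c_J x \<le> B"
  by (rule c_J_least) (use c_m_le_norm order_trans in blast)

lemma c_J_nonneg: "bounded (range x) \<Longrightarrow> 0 \<le> c_J x"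
  using c_m_le_c_J[of x 0] c_m_nonneg[of x 0] by simp

lemma bounded_range_comp: "bounded (range x) \<Longrightarrow> bounded (range (x \<circ> r))"
  by (rule bounded_subset) auto

lemma bdd_above_c_J_subseqs:
  fixes x :: "nat \<Rightarrow> 'a::banach"
  assumes "bounded (range x)"
  shows "bdd_above {c_J (x \<circ> r) | r. strict_mono r}"
proof -
  obtain B where "\<And>n. norm (x n) \<le> B" using assms by (auto simp: bounded_iff)
  then have "c_J (x \<circ> r) \<le> B" for r by (intro c_J_le_bound) simp
  then show ?thesis by (intro bdd_aboveI[where M = B]) blast
qed

lemma c_J_subseq_le_c_J_tilde:
  fixes x :: "nat \<Rightarrow> 'a::banach"
  assumes "bounded (range x)" "strict_mono r"
  shows "c_J (x \<circ> r) \<le> c_J_tilde x"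
  unfolding c_J_tilde_def by (rule cSup_upper[OF _ bdd_above_c_J_subseqs[OF assms(1)]]) (use assms(2) in blast)

lemma c_J_le_c_J_tilde: "bounded (range x) \<Longrightarrow> c_J x \<le> c_J_tilde x"
  using c_J_subseq_le_c_J_tilde[OF _ strict_mono_id, of x] by simp

lemma c_J_tilde_least:
  fixes x :: "nat \<Rightarrow> 'a::banach"
  assumes "\<And>r. strict_mono r \<Longrightarrow> c_J (x \<circ> r) \<le> e"
  shows "c_J_tilde x \<le> e"
  unfolding c_J_tilde_def by (rule cSup_least) (use assms strict_mono_id in auto)

lemma c_J_stableI: "bounded (range x) \<Longrightarrow> c_J_tilde x \<le> c_J x \<Longrightarrow> c_J_stable x"
  unfolding c_J_stable_def using c_J_le_c_J_tilde by (blast intro: antisym)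

lemma c_m_less_imp_finite_combination:
  fixes x :: "nat \<Rightarrow> 'a::banach"
  assumes "bounded (range x)" and "c_m x m < e"
  obtains N \<beta> where "m < N" "(\<Sum>i\<in>{m..<N}. \<bar>\<beta> i\<bar>) = 1" "norm (\<Sum>i\<in>{m..<N}. \<beta> i *\<^sub>R x i) < e"
proof -
  obtain B where B: "\<And>n. norm (x n) \<le> B" using assms(1) by (auto simp: bounded_iff)
  obtain \<alpha> where \<alpha>0: "\<forall>n<m. \<alpha> n = 0" and \<alpha>1: "summable (\<lambda>n. \<bar>\<alpha> n\<bar>)" "(\<Sum>n. \<bar>\<alpha> n\<bar>) = 1"
    and less: "norm (\<Sum>n. \<alpha> n *\<^sub>R x n) < e"
    using cInf_lessD[OF c_m_set_nonempty assms(2)[unfolded c_m_eq_Inf]] unfolding c_m_set_def by blast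
  define S where "S = (\<lambda>N. \<Sum>i\<in>{m..<N}. \<bar>\<alpha> i\<bar>)"
  define V where "V = (\<lambda>N. \<Sum>i\<in>{m..<N}. \<alpha> i *\<^sub>R x i)"
  have tail_sum: "(\<Sum>i<N. f i) = (\<Sum>i\<in>{m..<N}. f i)" if "\<And>i. i < m \<Longrightarrow> f i = 0" for N and f :: "nat \<Rightarrow> 'b::comm_monoid_add"
    by (rule sum.mono_neutral_right) (use that in auto)
  have "S \<longlonglongrightarrow> 1"
    using summable_LIMSEQ[OF \<alpha>1(1)] \<alpha>0 \<alpha>1(2) unfolding S_def by (simp add: tail_sum)
  moreover have "V \<longlonglongrightarrow> (\<Sum>n. \<alpha> n *\<^sub>R x n)"
    using summable_LIMSEQ[OF summable_scaleR_bounded[OF \<alpha>1(1) B]] \<alpha>0 unfolding V_def by (simp add: tail_sum)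
  ultimately have "(\<lambda>N. norm (V N) / S N) \<longlonglongrightarrow> norm (\<Sum>n. \<alpha> n *\<^sub>R x n) / 1"
    by (intro tendsto_divide tendsto_norm) auto
  then have "eventually (\<lambda>N. norm (V N) / S N < e \<and> 0 < S N \<and> m < N) sequentially"
    using less \<open>S \<longlonglongrightarrow> 1\<close>
    by (intro eventually_conj order_tendstoD(2) order_tendstoD(1) eventually_gt_at_top) auto
  then obtain N where N: "norm (V N) / S N < e" "0 < S N" "m < N"
    by (auto simp: eventually_sequentially)
  show ?thesis
  proof (rule that[OF N(3)])
    show "(\<Sum>i\<in>{m..<N}. \<bar>\<alpha> i / S N\<bar>) = 1"
      using N(2) unfolding S_def by (simp add: sum_divide_distrib[symmetric])
    have "(\<Sum>i\<in>{m..<N}. (\<alpha> i / S N) *\<^sub>R x i) = (1 / S N) *\<^sub>R V N"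
      unfolding V_def by (simp add: scaleR_sum_right)
    then show "norm (\<Sum>i\<in>{m..<N}. (\<alpha> i / S N) *\<^sub>R x i) < e" using N(1,2) by simp
  qed
qed

section \<open>Subsequences and stabilisation\<close>

lemma sums_reindex_strict_mono_on:
  fixes f h :: "nat \<Rightarrow> 'a::real_normed_vector"
  assumes g: "strict_mono_on {m..} g" and f0: "\<And>n. n < m \<Longrightarrow> f n = 0"
    and hg: "\<And>n. m \<le> n \<Longrightarrow> h (g n) = f n" and h0: "\<And>i. i \<notin> g ` {m..} \<Longrightarrow> h i = 0"
  shows "h sums s \<longleftrightarrow> f sums s"
proof -
  have "strict_mono (\<lambda>n. g (n + m))"
    by (rule strict_monoI) (auto intro: strict_mono_onD[OF g])
  moreover have "h i = 0" if "i \<notin> range (\<lambda>n. g (n + m))" for i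
  proof (rule h0)
    show "i \<notin> g ` {m..}"
    proof
      assume "i \<in> g ` {m..}"
      then obtain n where "m \<le> n" "i = g (n - m + m)" by auto
      then show False using that by blast
    qed
  qed
  ultimately have "(\<lambda>n. h (g (n + m))) sums s \<longleftrightarrow> h sums s" by (rule sums_mono_reindex)
  then have "h sums s \<longleftrightarrow> (\<lambda>n. f (n + m)) sums s" by (simp add: hg)
  also have "\<dots> \<longleftrightarrow> f sums s" using sums_iff_shift[of f m s] f0 by simp
  finally show ?thesis .
qed

text \<open>A combination of a subsequence is a combination of the sequence itself, with the
  coefficients moved to the selected indices.\<close>
lemma c_m_set_comp_subset:
  fixes x :: "nat \<Rightarrow> 'a::banach"
  assumes bx: "bounded (range x)" and g: "strict_mono_on {m..} g"
  shows "c_m_set (x \<circ> g) m \<subseteq> c_m_set x (g m)"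
proof
  fix a assume "a \<in> c_m_set (x \<circ> g) m"
  then obtain \<alpha> where \<alpha>0: "\<forall>n<m. \<alpha> n = 0" and \<alpha>1: "summable (\<lambda>n. \<bar>\<alpha> n\<bar>)" "(\<Sum>n. \<bar>\<alpha> n\<bar>) = 1"
    and a: "a = norm (\<Sum>n. \<alpha> n *\<^sub>R x (g n))" unfolding c_m_set_def by auto
  define \<beta> where "\<beta> = (\<lambda>i. if i \<in> g ` {m..} then \<alpha> (inv_into {m..} g i) else 0)"
  have \<beta>_g: "\<beta> (g n) = \<alpha> n" if "m \<le> n" for n
    using that strict_mono_on_imp_inj_on[OF g] by (simp add: \<beta>_def)
  have \<beta>_out: "\<beta> i = 0" if "i \<notin> g ` {m..}" for i using that by (simp add: \<beta>_def)
  have \<beta>_below: "\<beta> i = 0" if "i < g m" for i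
    using that strict_mono_on_leD[OF g] \<beta>_out by force
  obtain B where "\<And>n. norm (x n) \<le> B" using bx by (auto simp: bounded_iff)
  then have "(\<lambda>n. \<alpha> n *\<^sub>R x (g n)) sums (\<Sum>n. \<alpha> n *\<^sub>R x (g n))"
    by (intro summable_sums summable_scaleR_bounded[OF \<alpha>1(1)])
  then have comb: "(\<lambda>i. \<beta> i *\<^sub>R x i) sums (\<Sum>n. \<alpha> n *\<^sub>R x (g n))"
    by (subst sums_reindex_strict_mono_on[OF g]) (simp_all add: \<alpha>0 \<beta>_g \<beta>_out)
  have "(\<lambda>n. \<bar>\<alpha> n\<bar>) sums 1" using \<alpha>1 by (simp add: sums_iff)
  then have l1: "(\<lambda>i. \<bar>\<beta> i\<bar>) sums 1"
    by (subst sums_reindex_strict_mono_on[OF g]) (simp_all add: \<alpha>0 \<beta>_g \<beta>_out)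
  show "a \<in> c_m_set x (g m)"
    unfolding c_m_set_def a using \<beta>_below sums_unique[OF comb] l1
    by (intro CollectI exI[of _ \<beta>]) (simp add: sums_iff)
qed

lemma c_J_le_of_eventually_subseq:
  fixes x :: "nat \<Rightarrow> 'a::banach"
  assumes bx: "bounded (range x)" and r: "strict_mono r" and r': "strict_mono r'"
    and eventually_in: "\<And>j. K \<le> j \<Longrightarrow> r' j \<in> range r"
  shows "c_J (x \<circ> r) \<le> c_J (x \<circ> r')"
proof (rule c_J_least)
  fix m
  define M where "M = max K (r m)"
  define g where "g = (\<lambda>j. inv r (r' j))"
  have rg: "r (g j) = r' j" if "M \<le> j" for j
    using eventually_in[of j] that unfolding g_def M_def by (simp add: f_inv_into_f)
  have g: "strict_mono_on {M..} g"
  proof (rule strict_mono_onI)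
    fix a b assume "a \<in> {M..}" "b \<in> {M..}" "a < b"
    then have "r (g a) < r (g b)" using strict_monoD[OF r'] rg by simp
    then show "g a < g b" using strict_mono_less[OF r] by blast
  qed
  have "r m \<le> r (g M)" using seq_suble[OF r', of M] rg[of M] unfolding M_def by simp
  then have "m \<le> g M" using r by (simp add: strict_mono_less_eq)
  have "c_m_set (x \<circ> r') M = c_m_set ((x \<circ> r) \<circ> g) M" by (rule c_m_set_cong) (simp add: rg)
  also have "\<dots> \<subseteq> c_m_set (x \<circ> r) (g M)" by (rule c_m_set_comp_subset[OF bounded_range_comp[OF bx] g])
  also have "\<dots> \<subseteq> c_m_set (x \<circ> r) m" by (rule c_m_set_antimono) fact
  finally have "c_m (x \<circ> r) m \<le> c_m (x \<circ> r') M"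
    unfolding c_m_eq_Inf by (rule cInf_superset_mono[OF c_m_set_nonempty bdd_below_c_m_set])
  also have "\<dots> \<le> c_J (x \<circ> r')" by (rule c_m_le_c_J[OF bounded_range_comp[OF bx]])
  finally show "c_m (x \<circ> r) m \<le> c_J (x \<circ> r')" .
qed

lemma c_J_le_c_J_tilde_of_eventually_subseq:
  fixes x :: "nat \<Rightarrow> 'a::banach"
  assumes bx: "bounded (range x)" and r: "strict_mono r" and r': "strict_mono r'"
    and eventually_in: "\<And>j. K \<le> j \<Longrightarrow> r' j \<in> range r"
  shows "c_J (x \<circ> r') \<le> c_J_tilde (x \<circ> r)"
proof -
  define g where "g = (\<lambda>j. inv r (r' (j + K)))"
  have rg: "r (g j) = r' (j + K)" for j
    using eventually_in[of "j + K"] unfolding g_def by (simp add: f_inv_into_f)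
  have g: "strict_mono g"
  proof (rule strict_monoI)
    fix a b :: nat assume "a < b"
    then have "r (g a) < r (g b)" using strict_monoD[OF r'] rg by simp
    then show "g a < g b" using strict_mono_less[OF r] by blast
  qed
  have "c_J (x \<circ> r') \<le> c_J (x \<circ> (r \<circ> g))"
    by (rule c_J_le_of_eventually_subseq[OF bx r' strict_mono_o[OF r g], of 0]) (unfold comp_apply rg, rule rangeI)
  also have "\<dots> \<le> c_J_tilde (x \<circ> r)"
    using c_J_subseq_le_c_J_tilde[OF bounded_range_comp[OF bx] g] by (simp add: o_assoc)
  finally show ?thesis .
qed

lemma diagonal_subseq:
  assumes S: "\<And>k. strict_mono (S k)" and step: "\<And>k. \<exists>t. strict_mono t \<and> S (Suc k) = S k \<circ> t"
  shows "strict_mono (\<lambda>j. S j j)" and "k \<le> j \<Longrightarrow> S j j \<in> range (S k)"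
proof -
  have "range (S j) \<subseteq> range (S k)" if "k \<le> j" for k j
    using that
  proof (induction j rule: dec_induct)
    case (step j)
    obtain t where "S (Suc j) = S j \<circ> t" using assms(2) by blast
    then have "range (S (Suc j)) \<subseteq> range (S j)" by auto
    then show ?case using step.IH by blast
  qed simp
  then show "k \<le> j \<Longrightarrow> S j j \<in> range (S k)" by blast
  show "strict_mono (\<lambda>j. S j j)"
  proof (rule strict_monoI_Suc)
    fix j
    obtain t where t: "strict_mono t" "S (Suc j) = S j \<circ> t" using step by blast
    have "j < t (Suc j)" using seq_suble[OF t(1), of "Suc j"] by simp
    then show "S j j < S (Suc j) (Suc j)" using S[of j] t(2) by (simp add: strict_mono_less)
  qed
qed

lemma exists_subseq_chain:
  fixes x :: "nat \<Rightarrow> 'a::banach"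
  assumes bx: "bounded (range x)" and \<eta>: "\<And>k. 0 < \<eta> k"
  obtains S where "S 0 = id" "\<And>k. strict_mono (S k)" "\<And>k. \<exists>t. strict_mono t \<and> S (Suc k) = S k \<circ> t"
    "\<And>k. c_J_tilde (x \<circ> S k) - \<eta> k < c_J (x \<circ> S (Suc k))"
proof -
  have "\<exists>t. strict_mono s \<longrightarrow> strict_mono t \<and> c_J_tilde (x \<circ> s) - \<eta> k < c_J (x \<circ> s \<circ> t)" for s k
  proof (cases "strict_mono s")
    case True
    have "c_J_tilde (x \<circ> s) - \<eta> k < Sup {c_J ((x \<circ> s) \<circ> t) | t. strict_mono t}"
      using \<eta>[of k] unfolding c_J_tilde_def by simp
    then show ?thesis
      using less_cSup_iff[OF _ bdd_above_c_J_subseqs[OF bounded_range_comp[OF bx]]] strict_mono_id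
      by blast
  qed simp
  then obtain T where T: "\<And>s k. strict_mono s \<Longrightarrow>
      strict_mono (T s k) \<and> c_J_tilde (x \<circ> s) - \<eta> k < c_J (x \<circ> s \<circ> T s k)"
    by metis
  define S where "S = rec_nat id (\<lambda>k s. s \<circ> T s k)"
  have S_0: "S 0 = id" and S_Suc: "S (Suc k) = S k \<circ> T (S k) k" for k unfolding S_def by simp_all
  have S: "strict_mono (S k)" for k
  proof (induction k)
    case (Suc k)
    then show ?case unfolding S_Suc using T strict_mono_o by blast
  qed (simp add: S_0 strict_mono_def)
  show ?thesis
  proof (rule that)
    show "S 0 = id" "strict_mono (S k)" for k by (fact S_0 S)+
    show "\<exists>t. strict_mono t \<and> S (Suc k) = S k \<circ> t" for k using S_Suc T S by blast
    show "c_J_tilde (x \<circ> S k) - \<eta> k < c_J (x \<circ> S (Suc k))" for k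
      using T[OF S[of k], of k] by (simp add: S_Suc o_assoc)
  qed
qed

text \<open>The diagonal of a chain of subsequences, each nearly attaining the c_J_tilde of the
  previous one up to \<eta> k \<longlonglongrightarrow> 0, is c_J-stable.\<close>
lemma exists_c_J_stable_subseq:
  fixes x :: "nat \<Rightarrow> 'a::banach"
  assumes bx: "bounded (range x)" and \<epsilon>: "0 < \<epsilon>"
  obtains d where "strict_mono d" "c_J_stable (x \<circ> d)" "(1 - \<epsilon>) * c_J_tilde x \<le> c_J (x \<circ> d)"
proof -
  define \<theta> where "\<theta> = (if 0 < c_J_tilde x then \<epsilon> * c_J_tilde x else 1)"
  have \<theta>: "0 < \<theta>" unfolding \<theta>_def using \<epsilon> by auto
  define \<eta> where "\<eta> = (\<lambda>k. \<theta> * inverse (real (Suc k)))"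
  obtain S where S_0: "S 0 = id" and S: "\<And>k. strict_mono (S k)"
    and step: "\<And>k. \<exists>t. strict_mono t \<and> S (Suc k) = S k \<circ> t"
    and approx: "\<And>k. c_J_tilde (x \<circ> S k) - \<eta> k < c_J (x \<circ> S (Suc k))"
    using exists_subseq_chain[OF bx, of \<eta>] \<theta> unfolding \<eta>_def by auto
  define d where "d = (\<lambda>j. S j j)"
  have d: "strict_mono d" and d_in: "\<And>k j. k \<le> j \<Longrightarrow> d j \<in> range (S k)"
    using diagonal_subseq[of S] S step unfolding d_def by blast+
  have lower: "c_J (x \<circ> S (Suc k)) \<le> c_J (x \<circ> d)" for k
    by (rule c_J_le_of_eventually_subseq[OF bx S d, of "Suc k"]) (simp add: d_in)
  have "c_J ((x \<circ> d) \<circ> t) \<le> c_J (x \<circ> d)" if t: "strict_mono t" for t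
  proof -
    have tilde: "c_J (x \<circ> (d \<circ> t)) \<le> c_J_tilde (x \<circ> S k)" for k
    proof (rule c_J_le_c_J_tilde_of_eventually_subseq[OF bx S strict_mono_o[OF d t]])
      fix j assume "k \<le> j"
      then have "k \<le> t j" using seq_suble[OF t, of j] by simp
      then show "(d \<circ> t) j \<in> range (S k)" using d_in by simp
    qed
    have gap: "c_J ((x \<circ> d) \<circ> t) - c_J (x \<circ> d) \<le> \<eta> k" for k
      using tilde[of k] approx[of k] lower[of k] by (simp add: o_assoc)
    have "\<eta> \<longlonglongrightarrow> 0"
      unfolding \<eta>_def by (intro tendsto_mult_right_zero LIMSEQ_inverse_real_of_nat)
    then have "c_J ((x \<circ> d) \<circ> t) - c_J (x \<circ> d) \<le> 0"
      by (rule LIMSEQ_le_const) (use gap in blast)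
    then show ?thesis by simp
  qed
  then have "c_J_stable (x \<circ> d)"
    by (intro c_J_stableI c_J_tilde_least bounded_range_comp[OF bx])
  moreover have "(1 - \<epsilon>) * c_J_tilde x \<le> c_J (x \<circ> d)"
  proof (cases "0 < c_J_tilde x")
    case True
    then show ?thesis using approx[of 0] lower[of 0] by (simp add: S_0 \<eta>_def \<theta>_def algebra_simps)
  next
    case False
    then have "c_J_tilde x = 0" using c_J_le_c_J_tilde[OF bx] c_J_nonneg[OF bx] by linarith
    then show ?thesis using c_J_nonneg[OF bounded_range_comp[OF bx]] by simp
  qed
  ultimately show ?thesis by (rule that[OF d])
qed

section \<open>Weakly Cauchy sequences\<close>

lemma norm_le_of_functional_ball_bound:
  fixes v :: "'a::real_normed_vector"
  assumes \<rho>: "0 < \<rho>" and bound: "\<And>\<phi>. \<phi> \<in> ball \<phi>0 \<rho> \<Longrightarrow> \<bar>blinfun_apply \<phi> v\<bar> \<le> k"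
  shows "norm v \<le> 4 * k / \<rho>"
proof -
  obtain h where h: "bounded_linear h" "\<And>w. \<bar>h w\<bar> \<le> norm w" "h v = norm v"
    using norming_functional by blast
  define \<psi> where "\<psi> = Blinfun h"
  have \<psi>: "blinfun_apply \<psi> = h" unfolding \<psi>_def using h(1) by (rule bounded_linear_Blinfun_apply)
  have "norm \<psi> \<le> 1" by (rule norm_blinfun_bound) (use h(2) \<psi> in auto)
  then have "\<phi>0 + (\<rho> / 2) *\<^sub>R \<psi> \<in> ball \<phi>0 \<rho>" using \<rho> by (simp add: dist_norm)
  then have "\<bar>blinfun_apply \<phi>0 v + \<rho> / 2 * norm v\<bar> \<le> k"
    using bound \<psi> h(3) by (fastforce simp: blinfun.add_left blinfun.scaleR_left)
  moreover have "\<bar>blinfun_apply \<phi>0 v\<bar> \<le> k" using bound \<rho> by simp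
  ultimately have "\<rho> / 2 * norm v \<le> 2 * k" by linarith
  then show ?thesis using \<rho> by (simp add: field_simps)
qed

text \<open>Uniform boundedness principle, via the Baire category theorem in the dual space.\<close>
theorem weakly_bounded_imp_bounded:
  fixes y :: "nat \<Rightarrow> 'a::banach"
  assumes weakly_bounded: "\<And>f :: 'a \<Rightarrow> real. bounded_linear f \<Longrightarrow> bounded (range (\<lambda>n. f (y n)))"
  shows "bounded (range y)"
proof -
  define F where "F = (\<lambda>k::nat. {\<phi> :: 'a \<Rightarrow>\<^sub>L real. \<forall>n. \<bar>blinfun_apply \<phi> (y n)\<bar> \<le> real k})"
  have "closed (F k)" for k
  proof -
    have "F k = (\<Inter>n. {\<phi>. \<bar>blinfun_apply \<phi> (y n)\<bar> \<le> real k})" unfolding F_def by auto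
    moreover have "closed {\<phi> :: 'a \<Rightarrow>\<^sub>L real. \<bar>blinfun_apply \<phi> (y n)\<bar> \<le> real k}" for n
      by (intro closed_Collect_le continuous_intros)
    ultimately show ?thesis by auto
  qed
  moreover have "\<Union>(range F) = UNIV"
  proof -
    have "\<exists>k. \<phi> \<in> F k" for \<phi>
    proof -
      obtain K where "\<And>n. \<bar>blinfun_apply \<phi> (y n)\<bar> \<le> K"
        using weakly_bounded[OF blinfun.bounded_linear_right] by (auto simp: bounded_iff)
      then have "\<And>n. \<bar>blinfun_apply \<phi> (y n)\<bar> \<le> real (nat \<lceil>K\<rceil>)"
        by (meson order_trans real_nat_ceiling_ge)
      then show ?thesis unfolding F_def by blast
    qed
    then show ?thesis by auto
  qed
  ultimately obtain k where "interior (F k) \<noteq> {}"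
    using Baire_category_alt[of euclidean "range F"]
    by (auto simp: completely_metrizable_space_euclidean)
  then obtain \<phi>0 \<rho> where \<rho>: "0 < \<rho>" "ball \<phi>0 \<rho> \<subseteq> F k"
    by (meson all_not_in_conv mem_interior)
  then have "norm (y n) \<le> 4 * real k / \<rho>" for n
    by (intro norm_le_of_functional_ball_bound) (auto simp: F_def)
  then show ?thesis unfolding bounded_iff by blast
qed

lemma weakly_Cauchy_imp_bounded:
  fixes y :: "nat \<Rightarrow> 'a::banach"
  assumes "weakly_Cauchy y"
  shows "bounded (range y)"
  by (rule weakly_bounded_imp_bounded)
    (use assms in \<open>auto simp: weakly_Cauchy_def Bseq_eq_bounded[symmetric] intro: Cauchy_Bseq\<close>)

lemma weakly_Cauchy_comp: "weakly_Cauchy y \<Longrightarrow> strict_mono r \<Longrightarrow> weakly_Cauchy (y \<circ> r)"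
  unfolding weakly_Cauchy_def using Cauchy_subseq_Cauchy by (fastforce simp: o_def)

lemma weakly_Cauchy_minus: "weakly_Cauchy y \<Longrightarrow> weakly_Cauchy (\<lambda>n. - y n)"
  unfolding weakly_Cauchy_def
  using bounded_linear_compose[OF _ bounded_linear_minus[OF bounded_linear_ident]] by blast

section \<open>Perturbation by a weakly Cauchy sequence\<close>

lemma sum_atLeastLessThan_if_split:
  fixes F :: "nat \<Rightarrow> 'a \<Rightarrow> 'b::comm_monoid_add"
  assumes "m \<le> k" "k \<le> n"
  shows "(\<Sum>i\<in>{m..<n}. F i (if i < k then a i else b i)) = (\<Sum>i\<in>{m..<k}. F i (a i)) + (\<Sum>i\<in>{k..<n}. F i (b i))"
proof -
  have "(\<Sum>i\<in>{m..<n}. F i (if i < k then a i else b i))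
      = (\<Sum>i\<in>{m..<k}. F i (if i < k then a i else b i)) + (\<Sum>i\<in>{k..<n}. F i (if i < k then a i else b i))"
    by (rule sum.atLeastLessThan_concat[OF assms, symmetric])
  also have "\<dots> = (\<Sum>i\<in>{m..<k}. F i (a i)) + (\<Sum>i\<in>{k..<n}. F i (b i))"
    by (intro arg_cong2[where f = "(+)"] sum.cong) auto
  finally show ?thesis .
qed

text \<open>Two normalised blocks with small norm are combined, with weights given by each other's
  coefficient sums, into one whose coefficients sum to zero.\<close>
lemma c_J_less_imp_zero_sum_block:
  fixes x :: "nat \<Rightarrow> 'a::banach"
  assumes bx: "bounded (range x)" and less: "c_J x < e"
  obtains N \<rho> where "m < N" "(\<Sum>i\<in>{m..<N}. \<bar>\<rho> i\<bar>) = 1" "(\<Sum>i\<in>{m..<N}. \<rho> i) = 0"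
    "norm (\<Sum>i\<in>{m..<N}. \<rho> i *\<^sub>R x i) \<le> e"
proof -
  have c_m_less: "c_m x k < e" for k using c_m_le_c_J[OF bx] less by (rule le_less_trans)
  obtain N1 \<beta>1 where N1: "m < N1"
    and \<beta>1: "(\<Sum>i\<in>{m..<N1}. \<bar>\<beta>1 i\<bar>) = 1" "norm (\<Sum>i\<in>{m..<N1}. \<beta>1 i *\<^sub>R x i) < e"
    using c_m_less_imp_finite_combination[OF bx c_m_less] .
  obtain N2 \<beta>2 where N2: "N1 < N2"
    and \<beta>2: "(\<Sum>i\<in>{N1..<N2}. \<bar>\<beta>2 i\<bar>) = 1" "norm (\<Sum>i\<in>{N1..<N2}. \<beta>2 i *\<^sub>R x i) < e"
    using c_m_less_imp_finite_combination[OF bx c_m_less] .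
  define \<sigma>1 where "\<sigma>1 = (\<Sum>i\<in>{m..<N1}. \<beta>1 i)"
  define \<sigma>2 where "\<sigma>2 = (\<Sum>i\<in>{N1..<N2}. \<beta>2 i)"
  show ?thesis
  proof (cases "\<sigma>1 = 0")
    case True
    then show ?thesis using that[OF N1 \<beta>1(1)] \<beta>1(2) unfolding \<sigma>1_def by simp
  next
    case False
    define D where "D = \<bar>\<sigma>1\<bar> + \<bar>\<sigma>2\<bar>"
    have D: "0 < D" using False unfolding D_def by simp
    define \<rho> where "\<rho> = (\<lambda>i. if i < N1 then \<sigma>2 / D * \<beta>1 i else - (\<sigma>1 / D * \<beta>2 i))"
    have split: "(\<Sum>i\<in>{m..<N2}. F i (\<rho> i))
        = (\<Sum>i\<in>{m..<N1}. F i (\<sigma>2 / D * \<beta>1 i)) + (\<Sum>i\<in>{N1..<N2}. F i (- (\<sigma>1 / D * \<beta>2 i)))"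
      for F :: "nat \<Rightarrow> real \<Rightarrow> 'b::comm_monoid_add"
      unfolding \<rho>_def using N1 N2 by (intro sum_atLeastLessThan_if_split) auto
    have "(\<Sum>i\<in>{m..<N2}. \<bar>\<rho> i\<bar>) = (\<bar>\<sigma>2\<bar> + \<bar>\<sigma>1\<bar>) / D"
      using split[of "\<lambda>_ t. \<bar>t\<bar>"] \<beta>1(1) \<beta>2(1) D
      by (simp add: abs_mult sum_distrib_left[symmetric] sum_divide_distrib[symmetric] add_divide_distrib)
    then have "(\<Sum>i\<in>{m..<N2}. \<bar>\<rho> i\<bar>) = 1" using D unfolding D_def by simp
    moreover have "(\<Sum>i\<in>{m..<N2}. \<rho> i) = 0"
    proof -
      have "(\<Sum>i\<in>{m..<N1}. \<sigma>2 / D * \<beta>1 i) = \<sigma>2 / D * \<sigma>1"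
        unfolding \<sigma>1_def by (rule sum_distrib_left[symmetric])
      moreover have "(\<Sum>i\<in>{N1..<N2}. - (\<sigma>1 / D * \<beta>2 i)) = - (\<sigma>1 / D * \<sigma>2)"
        unfolding \<sigma>2_def sum_negf sum_distrib_left ..
      ultimately show ?thesis using split[of "\<lambda>_ t. t"] by simp
    qed
    moreover have "norm (\<Sum>i\<in>{m..<N2}. \<rho> i *\<^sub>R x i) \<le> e"
    proof -
      have "(\<Sum>i\<in>{m..<N2}. \<rho> i *\<^sub>R x i)
          = (\<sigma>2 / D) *\<^sub>R (\<Sum>i\<in>{m..<N1}. \<beta>1 i *\<^sub>R x i) - (\<sigma>1 / D) *\<^sub>R (\<Sum>i\<in>{N1..<N2}. \<beta>2 i *\<^sub>R x i)"
        using split[of "\<lambda>i t. t *\<^sub>R x i"] by (simp add: scaleR_sum_right sum_negf)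
      also have "norm \<dots> \<le> \<bar>\<sigma>2 / D\<bar> * norm (\<Sum>i\<in>{m..<N1}. \<beta>1 i *\<^sub>R x i)
          + \<bar>\<sigma>1 / D\<bar> * norm (\<Sum>i\<in>{N1..<N2}. \<beta>2 i *\<^sub>R x i)"
        by (rule order_trans[OF norm_triangle_ineq4]) (simp only: norm_scaleR order_refl)
      also have "\<dots> \<le> \<bar>\<sigma>2 / D\<bar> * e + \<bar>\<sigma>1 / D\<bar> * e"
        using \<beta>1(2) \<beta>2(2) by (intro add_mono mult_left_mono) auto
      also have "\<dots> = (\<bar>\<sigma>1\<bar> + \<bar>\<sigma>2\<bar>) / D * e"
        by (simp add: abs_of_pos[OF D] add_divide_distrib distrib_right)
      also have "\<dots> = e" using D unfolding D_def by simp
      finally show ?thesis .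
    qed
    ultimately show ?thesis using that N1 N2 by (meson less_trans)
  qed
qed

lemma zero_sum_blocks_tendsto_zero:
  fixes a :: "nat \<Rightarrow> real"
  assumes a: "Cauchy a" and b: "strict_mono b"
    and \<rho>: "\<And>j. (\<Sum>i\<in>{b j..<b (Suc j)}. \<bar>\<rho> j i\<bar>) = 1" "\<And>j. (\<Sum>i\<in>{b j..<b (Suc j)}. \<rho> j i) = 0"
  shows "(\<lambda>j. \<Sum>i\<in>{b j..<b (Suc j)}. \<rho> j i * a i) \<longlonglongrightarrow> 0"
proof (rule LIMSEQ_I)
  fix r :: real assume "0 < r"
  then obtain N where N: "\<And>i i'. N \<le> i \<Longrightarrow> N \<le> i' \<Longrightarrow> \<bar>a i - a i'\<bar> < r / 2"
    using CauchyD[OF a, of "r / 2"] by auto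
  have "norm (\<Sum>i\<in>{b j..<b (Suc j)}. \<rho> j i * a i) < r" if "N \<le> j" for j
  proof -
    have N_le: "N \<le> b j" using seq_suble[OF b, of j] that by simp
    text \<open>The coefficients sum to zero, so a may be recentred at a (b j).\<close>
    have "(\<Sum>i\<in>{b j..<b (Suc j)}. \<rho> j i * a i) = (\<Sum>i\<in>{b j..<b (Suc j)}. \<rho> j i * (a i - a (b j)))"
      using \<rho>(2)[of j] by (simp add: right_diff_distrib sum_subtractf sum_distrib_right[symmetric])
    also have "\<bar>\<dots>\<bar> \<le> (\<Sum>i\<in>{b j..<b (Suc j)}. \<bar>\<rho> j i\<bar> * (r / 2))"
    proof (intro order_trans[OF sum_abs] sum_mono)
      fix i assume "i \<in> {b j..<b (Suc j)}"
      then have "\<bar>a i - a (b j)\<bar> \<le> r / 2" using N[of i "b j"] N_le by fastforce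
      then show "\<bar>\<rho> j i * (a i - a (b j))\<bar> \<le> \<bar>\<rho> j i\<bar> * (r / 2)"
        unfolding abs_mult by (rule mult_left_mono) simp
    qed
    also have "\<dots> = r / 2" unfolding sum_distrib_right[symmetric] \<rho>(1) by simp
    finally show ?thesis using \<open>0 < r\<close> by simp
  qed
  then show "\<exists>N. \<forall>j\<ge>N. norm ((\<Sum>i\<in>{b j..<b (Suc j)}. \<rho> j i * a i) - 0) < r" by auto
qed

lemma sum_atLeastLessThan_blocks:
  fixes b :: "nat \<Rightarrow> nat" and f :: "nat \<Rightarrow> 'a::comm_monoid_add"
  assumes "mono b"
  shows "(\<Sum>i\<in>{b 0..<b K}. f i) = (\<Sum>j<K. \<Sum>i\<in>{b j..<b (Suc j)}. f i)"
proof (induction K)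
  case (Suc K)
  have "b 0 \<le> b K" "b K \<le> b (Suc K)" using assms by (auto simp: mono_def)
  then show ?case using Suc sum.atLeastLessThan_concat[where m = "b 0" and n = "b K" and p = "b (Suc K)" and g = f] by simp
qed simp

lemma c_m_le_block_combination:
  fixes x :: "nat \<Rightarrow> 'a::banach"
  assumes b: "strict_mono b" and \<rho>: "\<And>j. (\<Sum>i\<in>{b j..<b (Suc j)}. \<bar>\<rho> j i\<bar>) = 1"
    and l: "\<And>j. 0 \<le> l j" "(\<Sum>j<J. l j) = 1"
  shows "c_m x (b 0) \<le> norm (\<Sum>j<J. l j *\<^sub>R (\<Sum>i\<in>{b j..<b (Suc j)}. \<rho> j i *\<^sub>R x i))"
proof -
  define \<beta> where "\<beta> = (\<lambda>i. \<Sum>j<J. if i \<in> {b j..<b (Suc j)} then l j * \<rho> j i else 0)"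
  have block_unique: "j = j'" if "i \<in> {b j..<b (Suc j)}" "i \<in> {b j'..<b (Suc j')}" for i j j'
    using that strict_mono_less[OF b] by (metis atLeastLessThan_iff le_less_trans less_Suc_eq_le linorder_neqE_nat not_le)
  have \<beta>: "\<beta> i = l j * \<rho> j i" if "i \<in> {b j..<b (Suc j)}" "j < J" for i j
  proof -
    have "\<beta> i = (\<Sum>j'<J. if j' = j then l j * \<rho> j i else 0)"
      unfolding \<beta>_def by (rule sum.cong) (use that block_unique in auto)
    then show ?thesis using that by simp
  qed
  have regroup: "(\<Sum>i\<in>{b 0..<b J}. F i (\<beta> i)) = (\<Sum>j<J. \<Sum>i\<in>{b j..<b (Suc j)}. F i (l j * \<rho> j i))"
    for F :: "nat \<Rightarrow> real \<Rightarrow> 'b::comm_monoid_add"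
    unfolding sum_atLeastLessThan_blocks[OF strict_mono_mono[OF b]] using \<beta> by (intro sum.cong) auto
  have "(\<Sum>i\<in>{b 0..<b J}. \<bar>\<beta> i\<bar>) = 1"
    using regroup[of "\<lambda>_ t. \<bar>t\<bar>"] \<rho> l by (simp add: abs_mult sum_distrib_left[symmetric])
  then have "c_m x (b 0) \<le> norm (\<Sum>i\<in>{b 0..<b J}. \<beta> i *\<^sub>R x i)" by (rule c_m_le_finite_combination)
  also have "(\<Sum>i\<in>{b 0..<b J}. \<beta> i *\<^sub>R x i) = (\<Sum>j<J. l j *\<^sub>R (\<Sum>i\<in>{b j..<b (Suc j)}. \<rho> j i *\<^sub>R x i))"
    using regroup[of "\<lambda>i t. t *\<^sub>R x i"] by (simp add: scaleR_sum_right)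
  finally show ?thesis .
qed

lemma convex_hull_range_obtain_indexed:
  fixes w :: "nat \<Rightarrow> 'a::real_vector"
  assumes "v \<in> convex hull (range w)"
  obtains J l where "\<And>j. 0 \<le> l j" "(\<Sum>j<J. l j) = 1" "v = (\<Sum>j<J. l j *\<^sub>R w j)"
proof -
  obtain S u where S: "finite S" "S \<subseteq> range w" and u: "\<forall>x\<in>S. 0 \<le> u x" "sum u S = 1"
    and v: "(\<Sum>x\<in>S. u x *\<^sub>R x) = v"
    using assms unfolding convex_hull_explicit by blast
  define idx where "idx = inv w"
  have w_idx: "w (idx x) = x" if "x \<in> S" for x using S(2) that unfolding idx_def by (auto simp: f_inv_into_f)
  then have inj: "inj_on idx S" by (metis inj_onI)
  obtain J where J: "idx ` S \<subseteq> {..<J}" using finite_nat_iff_bounded S(1) by blast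
  define l where "l = (\<lambda>j. if j \<in> idx ` S then u (w j) else 0)"
  have reindex: "(\<Sum>j<J. F (l j) (w j)) = (\<Sum>x\<in>S. F (u x) x)" if "\<And>x. F 0 x = 0"
    for F :: "real \<Rightarrow> 'a \<Rightarrow> 'b::comm_monoid_add"
  proof -
    have "(\<Sum>j<J. F (l j) (w j)) = (\<Sum>j\<in>idx ` S. F (l j) (w j))"
      by (rule sum.mono_neutral_right) (use J that in \<open>auto simp: l_def\<close>)
    also have "\<dots> = (\<Sum>x\<in>S. F (u x) x)"
      using inj w_idx by (simp add: sum.reindex l_def)
    finally show ?thesis .
  qed
  show ?thesis
  proof (rule that)
    show "0 \<le> l j" for j using u(1) w_idx by (auto simp: l_def)
    show "(\<Sum>j<J. l j) = 1" using reindex[of "\<lambda>t _. t"] u(2) by simp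
    show "v = (\<Sum>j<J. l j *\<^sub>R w j)" using reindex[of "\<lambda>t x. t *\<^sub>R x"] v by simp
  qed
qed

lemma norm_convex_combination_le:
  fixes u :: "nat \<Rightarrow> 'a::real_normed_vector"
  assumes "\<And>j. 0 \<le> l j" "(\<Sum>j<J. l j) = 1" "\<And>j. norm (u j) \<le> e"
  shows "norm (\<Sum>j<J. l j *\<^sub>R u j) \<le> e"
proof -
  have "norm (\<Sum>j<J. l j *\<^sub>R u j) \<le> (\<Sum>j<J. l j * e)"
    by (rule order_trans[OF norm_sum sum_mono]) (simp add: assms(1,3) mult_left_mono)
  also have "\<dots> = e" using assms(2) by (simp add: sum_distrib_right[symmetric])
  finally show ?thesis .
qed

lemma c_J_less_imp_zero_sum_blocks:
  fixes x :: "nat \<Rightarrow> 'a::banach"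
  assumes bx: "bounded (range x)" and less: "c_J x < e"
  obtains b \<rho> where "b 0 = m" "strict_mono b"
    "\<And>j. (\<Sum>i\<in>{b j..<b (Suc j)}. \<bar>\<rho> j i\<bar>) = 1" "\<And>j. (\<Sum>i\<in>{b j..<b (Suc j)}. \<rho> j i) = 0"
    "\<And>j. norm (\<Sum>i\<in>{b j..<b (Suc j)}. \<rho> j i *\<^sub>R x i) \<le> e"
proof -
  define P where "P = (\<lambda>M N (\<rho> :: nat \<Rightarrow> real). M < N \<and> (\<Sum>i\<in>{M..<N}. \<bar>\<rho> i\<bar>) = 1
    \<and> (\<Sum>i\<in>{M..<N}. \<rho> i) = 0 \<and> norm (\<Sum>i\<in>{M..<N}. \<rho> i *\<^sub>R x i) \<le> e)"
  have "\<forall>M. \<exists>N \<rho>. P M N \<rho>"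
    unfolding P_def using c_J_less_imp_zero_sum_block[OF bx less] by blast
  then obtain Nf \<rho>f where P: "\<And>M. P M (Nf M) (\<rho>f M)" by metis
  define b where "b = rec_nat m (\<lambda>_ k. Nf k)"
  have b_0: "b 0 = m" and b_Suc: "b (Suc j) = Nf (b j)" for j unfolding b_def by simp_all
  show ?thesis
  proof (rule that[where \<rho> = "\<lambda>j. \<rho>f (b j)"])
    show "b 0 = m" by (fact b_0)
    show "strict_mono b" by (rule strict_monoI_Suc) (use P in \<open>simp add: b_Suc P_def\<close>)
  qed (use P in \<open>auto simp: P_def b_Suc\<close>)
qed

lemma zero_sum_blocks_weakly_null:
  fixes y :: "nat \<Rightarrow> 'a::real_normed_vector"
  assumes y: "weakly_Cauchy y" and b: "strict_mono b"
    and \<rho>1: "\<And>j. (\<Sum>i\<in>{b j..<b (Suc j)}. \<bar>\<rho> j i\<bar>) = 1" and \<rho>0: "\<And>j. (\<Sum>i\<in>{b j..<b (Suc j)}. \<rho> j i) = 0"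
    and f: "bounded_linear (f :: 'a \<Rightarrow> real)"
  shows "(\<lambda>j. f (\<Sum>i\<in>{b j..<b (Suc j)}. \<rho> j i *\<^sub>R y i)) \<longlonglongrightarrow> 0"
proof -
  have "Cauchy (\<lambda>n. f (y n))" using y f unfolding weakly_Cauchy_def by blast
  then have "(\<lambda>j. \<Sum>i\<in>{b j..<b (Suc j)}. \<rho> j i * f (y i)) \<longlonglongrightarrow> 0"
    by (rule zero_sum_blocks_tendsto_zero[where b = b and \<rho> = \<rho>, OF _ b \<rho>1 \<rho>0])
  then show ?thesis using bounded_linear.linear[OF f] by (simp add: linear_sum linear_scale)
qed

text \<open>Zero-sum blocks of x of norm at most c_J x + t / 2 turn y into a weakly null sequence, some
  convex combination of which has norm below t / 2 by Mazur's theorem.\<close>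
lemma c_J_add_weakly_Cauchy_le:
  fixes x y :: "nat \<Rightarrow> 'a::banach"
  assumes bx: "bounded (range x)" and y: "weakly_Cauchy y"
  shows "c_J (\<lambda>n. x n + y n) \<le> c_J x"
proof (rule c_J_least)
  fix m
  show "c_m (\<lambda>n. x n + y n) m \<le> c_J x"
  proof (rule field_le_epsilon)
    fix t :: real assume t: "0 < t"
    obtain b \<rho> where b_0: "b 0 = m" and b: "strict_mono b"
      and \<rho>1: "\<And>j. (\<Sum>i\<in>{b j..<b (Suc j)}. \<bar>\<rho> j i\<bar>) = 1"
      and \<rho>0: "\<And>j. (\<Sum>i\<in>{b j..<b (Suc j)}. \<rho> j i) = 0"
      and \<rho>x: "\<And>j. norm (\<Sum>i\<in>{b j..<b (Suc j)}. \<rho> j i *\<^sub>R x i) \<le> c_J x + t / 2"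
      using c_J_less_imp_zero_sum_blocks[OF bx, of "c_J x + t / 2"] t by auto
    define w where "w = (\<lambda>j. \<Sum>i\<in>{b j..<b (Suc j)}. \<rho> j i *\<^sub>R y i)"
    have "0 \<in> closure (convex hull (range w))"
      unfolding w_def
      by (intro Mazur_weakly_null zero_sum_blocks_weakly_null[where b = b and \<rho> = \<rho>, OF y b \<rho>1 \<rho>0])
    then obtain v where "v \<in> convex hull (range w)" "norm v < t / 2"
      using t unfolding closure_approachable dist_norm by (metis diff_zero half_gt_zero)
    then obtain J l where l: "\<And>j. 0 \<le> l j" "(\<Sum>j<J. l j) = 1" and v: "norm (\<Sum>j<J. l j *\<^sub>R w j) < t / 2"
      by (metis convex_hull_range_obtain_indexed)
    have "c_m (\<lambda>n. x n + y n) m \<le> norm (\<Sum>j<J. l j *\<^sub>R (\<Sum>i\<in>{b j..<b (Suc j)}. \<rho> j i *\<^sub>R (x i + y i)))"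
      using c_m_le_block_combination[where b = b and \<rho> = \<rho> and x = "\<lambda>n. x n + y n", OF b \<rho>1 l] unfolding b_0 .
    also have "\<dots> = norm ((\<Sum>j<J. l j *\<^sub>R (\<Sum>i\<in>{b j..<b (Suc j)}. \<rho> j i *\<^sub>R x i)) + (\<Sum>j<J. l j *\<^sub>R w j))"
      by (simp add: w_def scaleR_add_right sum.distrib)
    also have "\<dots> \<le> (c_J x + t / 2) + t / 2"
      using norm_convex_combination_le[OF l \<rho>x] v by (intro order_trans[OF norm_triangle_ineq] add_mono) auto
    finally show "c_m (\<lambda>n. x n + y n) m \<le> c_J x + t" by simp
  qed
qed

lemma c_J_add_weakly_Cauchy:
  fixes x y :: "nat \<Rightarrow> 'a::banach"
  assumes bx: "bounded (range x)" and y: "weakly_Cauchy y"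
  shows "c_J (\<lambda>n. x n + y n) = c_J x"
proof (rule antisym)
  show "c_J (\<lambda>n. x n + y n) \<le> c_J x" by (rule c_J_add_weakly_Cauchy_le[OF bx y])
  have "bounded (range (\<lambda>n. x n + y n))"
    using bounded_plus_comp[OF _ weakly_Cauchy_imp_bounded[OF y]] bx by (simp add: image_def)
  then have "c_J (\<lambda>n. (x n + y n) + - y n) \<le> c_J (\<lambda>n. x n + y n)"
    by (rule c_J_add_weakly_Cauchy_le[OF _ weakly_Cauchy_minus[OF y]])
  then show "c_J x \<le> c_J (\<lambda>n. x n + y n)" by simp
qed

theorem lemma5p3:
  fixes x y :: "nat \<Rightarrow> 'a::banach" and \<epsilon> :: real
  assumes "bounded (range x)" and "weakly_Cauchy y" and "0 < \<epsilon>" and "\<epsilon> < 1"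
  shows "\<exists>r. strict_mono r
     \<and> c_J_stable (x \<circ> r) \<and> c_J_stable (\<lambda>k. x (r k) + y (r k))
     \<and> (1 - \<epsilon>) * c_J_tilde x \<le> c_J (x \<circ> r) \<and> c_J (x \<circ> r) \<le> c_J_tilde x
     \<and> c_J (\<lambda>k. x (r k) + y (r k)) = c_J (x \<circ> r)"
proof -
  obtain r where r: "strict_mono r" and stable: "c_J_stable (x \<circ> r)"
    and lower: "(1 - \<epsilon>) * c_J_tilde x \<le> c_J (x \<circ> r)"
    using exists_c_J_stable_subseq[OF assms(1,3)] by blast
  have equal: "c_J ((\<lambda>k. x (r k) + y (r k)) \<circ> t) = c_J ((x \<circ> r) \<circ> t)" if "strict_mono t" for t
    using c_J_add_weakly_Cauchy[OF bounded_range_comp[OF assms(1)] weakly_Cauchy_comp[OF assms(2)]]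
      strict_mono_o[OF r that] by (simp add: o_def)
  then have "c_J_tilde (\<lambda>k. x (r k) + y (r k)) = c_J_tilde (x \<circ> r)"
    unfolding c_J_tilde_def by (metis (no_types, lifting))
  then have "c_J_stable (\<lambda>k. x (r k) + y (r k))"
    using stable equal[OF strict_mono_id] unfolding c_J_stable_def by simp
  moreover have "c_J (x \<circ> r) \<le> c_J_tilde x" by (rule c_J_subseq_le_c_J_tilde[OF assms(1) r])
  ultimately show ?thesis using r stable lower equal[OF strict_mono_id] by auto
qed

end
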